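(* Let $m\ge 2$ and let $W$ be a channel from $\{1,\dots,m\}$ to $\{1,2\}$. Then \[ \underline{C}_{10}(W)=C(W)\quad\text{and}\quad \overline{C}_{10}(W)=C\left(\begin{pmatrix}1&0\\ \underline{P}_W(1)&1-\underline{P}_W(1)\end{pmatrix}\right). \]
   Context: A channel from a finite set $\mathcal{A}$ to a finite set $\mathcal{B}$ is a row-stochastic matrix $(W_{a,b})$. For a probability distribution $\mu$ on the input set, $I(\mu,W)=\sum_x\mu_x D(W_{x,*}\|\mu W)$ (Kullback–Leibler divergence, base-2 logarithm), and $C(W)=\max_\mu I(\mu,W)$. Let $\mathcal{X}=\{1,\dots,m\}$, $\mathcal{Y}=\{1,\dots,n\}$ (here $n=2$). A deterministic channel is a 0-1 channel, identified with a map $D:\mathcal{X}\to\mathcal{Y}$; $\mathcal{D}$ is the set of all of them and $\mathrm{rank}(D)$ is the matrix rank. $\Lambda(W)=\{\lambda\text{ probability distribution on }\mathcal{D}: W=\sum_D\lambda_DD\}$. For $\lambda\in\Lambda(W)$, $C_{10}(\lambda)=\max_{\mu} I(\mu,V^\lambda)$, where $\mu$ ranges over probability distributions on the set $\mathcal{X}^{\mathcal{D}}$ of maps $u:\mathcal{D}\to\mathcal{X}$, and $V^\lambda$ is the channel from $\mathcal{X}^{\mathcal{D}}$ to $\mathcal{Y}$ with $V^\lambda_{u,y}=\sum_D\lambda_D D_{u(D),y}$. $\underline{C}_{10}(W)=\inf_{\lambda\in\Lambda(W)}C_{10}(\lambda)$, $\overline{C}_{10}(W)=\sup_{\lambda\in\Lambda(W)}C_{10}(\lambda)$.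 $\underline{P}_W(1)=\min_{\lambda\in\Lambda(W)}\lambda(\{D:\mathrm{rank}(D)=1\})$. *)

theory Defs
  imports "HOL-Analysis.Analysis" "Jordan_Normal_Form.DL_Rank"
begin

(* Alphabets: X = {0..<m}, Y = {0..<n} (0-based rendering of {1..m}, {1..n}). *)

definition prob_dist :: "'a set \<Rightarrow> ('a \<Rightarrow> real) \<Rightarrow> bool" where
  "prob_dist A p \<longleftrightarrow> (\<forall>x\<in>A. 0 \<le> p x) \<and> sum p A = 1"

definition is_channel :: "'a set \<Rightarrow> 'b set \<Rightarrow> ('a \<Rightarrow> 'b \<Rightarrow> real) \<Rightarrow> bool" where
  "is_channel A B W \<longleftrightarrow> (\<forall>a\<in>A. prob_dist B (W a))"

definition out_dist :: "'a set \<Rightarrow> ('a \<Rightarrow> real) \<Rightarrow> ('a \<Rightarrow> 'b \<Rightarrow> real) \<Rightarrow> 'b \<Rightarrow> real" where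
  "out_dist A \<mu> W b = (\<Sum>x\<in>A. \<mu> x * W x b)"

definition KL :: "'b set \<Rightarrow> ('b \<Rightarrow> real) \<Rightarrow> ('b \<Rightarrow> real) \<Rightarrow> real" where
  "KL B p q = (\<Sum>b\<in>B. if p b = 0 then 0 else p b * log 2 (p b / q b))"

definition mutual_info :: "'a set \<Rightarrow> 'b set \<Rightarrow> ('a \<Rightarrow> real) \<Rightarrow> ('a \<Rightarrow> 'b \<Rightarrow> real) \<Rightarrow> real" where
  "mutual_info A B \<mu> W = (\<Sum>x\<in>A. if \<mu> x = 0 then 0 else \<mu> x * KL B (W x) (out_dist A \<mu> W))"

definition capacity :: "'a set \<Rightarrow> 'b set \<Rightarrow> ('a \<Rightarrow> 'b \<Rightarrow> real) \<Rightarrow> real" where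
  "capacity A B W = Sup {mutual_info A B \<mu> W | \<mu>. prob_dist A \<mu>}"

(* deterministic channels = maps D : X -> Y (extensional) *)
definition det_maps :: "nat \<Rightarrow> nat \<Rightarrow> (nat \<Rightarrow> nat) set" where
  "det_maps m n = PiE {0..<m} (\<lambda>_. {0..<n})"

definition det_entry :: "(nat \<Rightarrow> nat) \<Rightarrow> nat \<Rightarrow> nat \<Rightarrow> real" where
  "det_entry D x y = (if D x = y then 1 else 0)"

definition det_matrix :: "nat \<Rightarrow> nat \<Rightarrow> (nat \<Rightarrow> nat) \<Rightarrow> real mat" where
  "det_matrix m n D = mat m n (\<lambda>(x, y). det_entry D x y)"

definition det_rank :: "nat \<Rightarrow> nat \<Rightarrow> (nat \<Rightarrow> nat) \<Rightarrow> nat" where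
  "det_rank m n D = vec_space.rank m (det_matrix m n D)"

definition Lambda :: "nat \<Rightarrow> nat \<Rightarrow> (nat \<Rightarrow> nat \<Rightarrow> real) \<Rightarrow> ((nat \<Rightarrow> nat) \<Rightarrow> real) set" where
  "Lambda m n W = {lam. prob_dist (det_maps m n) lam \<and>
      (\<forall>x\<in>{0..<m}. \<forall>y\<in>{0..<n}. W x y = (\<Sum>D\<in>det_maps m n. lam D * det_entry D x y))}"

definition strategies :: "nat \<Rightarrow> nat \<Rightarrow> ((nat \<Rightarrow> nat) \<Rightarrow> nat) set" where
  "strategies m n = PiE (det_maps m n) (\<lambda>_. {0..<m})"

definition V_chan :: "nat \<Rightarrow> nat \<Rightarrow> ((nat \<Rightarrow> nat) \<Rightarrow> real) \<Rightarrow> ((nat \<Rightarrow> nat) \<Rightarrow> nat) \<Rightarrow> nat \<Rightarrow> real" where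
  "V_chan m n lam u y = (\<Sum>D\<in>det_maps m n. lam D * det_entry D (u D) y)"

definition C10 :: "nat \<Rightarrow> nat \<Rightarrow> ((nat \<Rightarrow> nat) \<Rightarrow> real) \<Rightarrow> real" where
  "C10 m n lam = capacity (strategies m n) {0..<n} (V_chan m n lam)"

definition lower_C10 :: "nat \<Rightarrow> nat \<Rightarrow> (nat \<Rightarrow> nat \<Rightarrow> real) \<Rightarrow> real" where
  "lower_C10 m n W = Inf (C10 m n ` Lambda m n W)"

definition upper_C10 :: "nat \<Rightarrow> nat \<Rightarrow> (nat \<Rightarrow> nat \<Rightarrow> real) \<Rightarrow> real" where
  "upper_C10 m n W = Sup (C10 m n ` Lambda m n W)"

definition lower_P1 :: "nat \<Rightarrow> nat \<Rightarrow> (nat \<Rightarrow> nat \<Rightarrow> real) \<Rightarrow> real" where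
  "lower_P1 m n W = Inf ((\<lambda>lam. \<Sum>D\<in>{D\<in>det_maps m n. det_rank m n D = 1}. lam D) ` Lambda m n W)"

definition Z_chan :: "real \<Rightarrow> nat \<Rightarrow> nat \<Rightarrow> real" where
  "Z_chan p x y = (if x = 0 then (if y = 0 then 1 else 0) else (if y = 0 then p else 1 - p))"

end

theory Submission
  imports Defs "HOL-Real_Asymp.Real_Asymp"
begin

text \<open>For binary outputs a channel is described by the probabilities of output \<open>0\<close> in its rows,
  and its capacity depends only on their minimum \<open>a\<close> and maximum \<open>b\<close>: it is the largest Jensen
  gap \<open>bin_cap a b\<close> of the binary entropy over \<open>[a, b]\<close>. For \<open>\<lambda> \<in> \<Lambda>(W)\<close> the inputs of
  \<open>V\<^sup>\<lambda>\<close> realise exactly the output-\<open>0\<close> probabilities between \<open>\<lambda>(0)\<close> and \<open>1 - \<lambda>(1)\<close>, where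
  \<open>\<lambda>(k)\<close> is the weight of the constant map \<open>k\<close>; the constant maps are exactly the rank-one
  maps. Hence \<open>C\<^sub>1\<^sub>0(\<lambda>) = bin_cap \<lambda>(0) (1 - \<lambda>(1))\<close>.

  Since \<open>\<lambda>(0)\<close> and \<open>1 - \<lambda>(1)\<close> enclose all output-\<open>0\<close> probabilities of \<open>W\<close>, monotonicity of
  \<open>bin_cap\<close> gives \<open>C\<^sub>1\<^sub>0(\<lambda>) \<ge> C(W)\<close>, with equality for the threshold decomposition of \<open>W\<close>.
  Convexity of mutual information in the channel gives \<open>C\<^sub>1\<^sub>0(\<lambda>) \<le> bin_cap (\<lambda>(0) + \<lambda>(1)) 1\<close>,
  the capacity of the Z-channel with parameter \<open>\<lambda>(0) + \<lambda>(1)\<close>, which decreases in that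
  parameter. Equality holds when one constant weight vanishes, and for \<open>m \<ge> 2\<close> this can be
  arranged without increasing \<open>\<lambda>(0) + \<lambda>(1)\<close>.\<close>

section \<open>The log-sum inequality\<close>

definition kl_term :: "real \<Rightarrow> real \<Rightarrow> real" where
  "kl_term p r = (if p = 0 then 0 else p * log 2 (p / r))"

lemma mult_ln_ratio_diff_le:
  fixes u c U C :: real
  assumes "u > 0" "c > 0" "U > 0" "C > 0"
  shows "u * ln (U / C) - u * ln (u / c) \<le> c * U / C - u"
proof -
  have pos: "c * U / (u * C) > 0" using assms by simp
  have "ln (c * U / (u * C)) \<le> c * U / (u * C) - 1" by (rule ln_le_minus_one[OF pos])
  moreover have "c * U / (u * C) = (U / C) / (u / c)" using assms by (simp add: field_simps)
  moreover have "ln ((U / C) / (u / c)) = ln (U / C) - ln (u / c)"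
    using assms by (subst ln_div) auto
  ultimately have "ln (U / C) - ln (u / c) \<le> c * U / (u * C) - 1" by simp
  then have "u * (ln (U / C) - ln (u / c)) \<le> u * (c * U / (u * C) - 1)"
    using assms(1) by (simp add: mult_left_mono)
  also have "u * (c * U / (u * C) - 1) = c * U / C - u" using assms by (simp add: field_simps)
  finally show ?thesis by (simp add: algebra_simps)
qed

lemma kl_term_antimono:
  assumes "0 \<le> p" "0 < r" "r \<le> r'"
  shows "kl_term p r' \<le> kl_term p r"
proof (cases "p = 0")
  case False
  then have p: "p > 0" using assms by simp
  have "ln (p / r') \<le> ln (p / r)" using p assms by (simp add: frac_le divide_left_mono)
  then have "p * (ln (p / r') / ln 2) \<le> p * (ln (p / r) / ln 2)"
    using p by (simp add: divide_right_mono mult_left_mono)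
  then show ?thesis using False by (simp add: kl_term_def log_def)
qed (simp add: kl_term_def)

lemma kl_term_add_le:
  assumes "0 \<le> u1" "0 \<le> u2" "0 \<le> c1" "0 \<le> c2" "u1 > 0 \<Longrightarrow> c1 > 0" "u2 > 0 \<Longrightarrow> c2 > 0"
  shows "kl_term (u1 + u2) (c1 + c2) \<le> kl_term u1 c1 + kl_term u2 c2"
proof -
  consider "u1 = 0" | "u2 = 0" | "u1 > 0" "u2 > 0" using assms by linarith
  then show ?thesis
  proof cases
    case 1
    show ?thesis
    proof (cases "u2 = 0")
      case False
      then have "kl_term u2 (c1 + c2) \<le> kl_term u2 c2" using assms by (intro kl_term_antimono) auto
      then show ?thesis using 1 by (simp add: kl_term_def)
    qed (use 1 in \<open>simp add: kl_term_def\<close>)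
  next
    case 2
    show ?thesis
    proof (cases "u1 = 0")
      case False
      then have "kl_term u1 (c1 + c2) \<le> kl_term u1 c1" using assms by (intro kl_term_antimono) auto
      then show ?thesis using 2 by (simp add: kl_term_def)
    qed (use 2 in \<open>simp add: kl_term_def\<close>)
  next
    case 3
    have c1: "c1 > 0" and c2: "c2 > 0" using 3 assms by auto
    have a1: "u1 * ln ((u1+u2) / (c1+c2)) - u1 * ln (u1 / c1) \<le> c1 * (u1+u2) / (c1+c2) - u1"
      by (rule mult_ln_ratio_diff_le) (use 3 c1 c2 in auto)
    have a2: "u2 * ln ((u1+u2) / (c1+c2)) - u2 * ln (u2 / c2) \<le> c2 * (u1+u2) / (c1+c2) - u2"
      by (rule mult_ln_ratio_diff_le) (use 3 c1 c2 in auto)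
    have "c1 * (u1+u2) / (c1+c2) + c2 * (u1+u2) / (c1+c2) = (c1 + c2) * (u1+u2) / (c1+c2)"
      by (simp add: add_divide_distrib distrib_right)
    also have "\<dots> = u1 + u2" using c1 c2 by simp
    finally have "c1 * (u1+u2) / (c1+c2) + c2 * (u1+u2) / (c1+c2) = u1 + u2" .
    then have "(u1 + u2) * ln ((u1+u2) / (c1+c2)) \<le> u1 * ln (u1 / c1) + u2 * ln (u2 / c2)"
      using a1 a2 by (simp add: algebra_simps)
    then have "(u1 + u2) * ln ((u1+u2) / (c1+c2)) / ln 2
        \<le> (u1 * ln (u1 / c1) + u2 * ln (u2 / c2)) / ln 2"
      by (simp add: divide_right_mono)
    then show ?thesis using 3 by (simp add: kl_term_def log_def add_divide_distrib)
  qed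
qed

lemma kl_term_scale:
  assumes "th \<ge> 0"
  shows "kl_term (th * p) (th * r) = th * kl_term p r"
  using assms by (auto simp: kl_term_def)

lemma kl_term_convex:
  assumes "a1 \<ge> 0" "a2 \<ge> 0" "b1 \<ge> 0" "b2 \<ge> 0" "a1 > 0 \<Longrightarrow> b1 > 0" "a2 > 0 \<Longrightarrow> b2 > 0"
    and "0 \<le> th" "th \<le> 1"
  shows "kl_term (th * a1 + (1 - th) * a2) (th * b1 + (1 - th) * b2)
    \<le> th * kl_term a1 b1 + (1 - th) * kl_term a2 b2"
proof -
  have "kl_term (th * a1 + (1 - th) * a2) (th * b1 + (1 - th) * b2)
        \<le> kl_term (th * a1) (th * b1) + kl_term ((1 - th) * a2) ((1 - th) * b2)"
    using assms by (intro kl_term_add_le) (auto simp: zero_less_mult_iff)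
  also have "\<dots> = th * kl_term a1 b1 + (1 - th) * kl_term a2 b2"
    using assms by (simp add: kl_term_scale)
  finally show ?thesis .
qed

section \<open>Binary entropy and the capacity of binary-output channels\<close>

definition plogp :: "real \<Rightarrow> real" where
  "plogp p = p * log 2 p"

definition bin_entropy :: "real \<Rightarrow> real" where
  "bin_entropy v = - (plogp v + plogp (1 - v))"

lemma plogp_eq_kl_term: "plogp p = kl_term p 1"
  by (simp add: plogp_def kl_term_def)

lemma plogp_convex:
  assumes "a \<ge> 0" "b \<ge> 0" "0 \<le> th" "th \<le> 1"
  shows "plogp (th * a + (1 - th) * b) \<le> th * plogp a + (1 - th) * plogp b"
  using kl_term_convex[of a b 1 1 th] assms by (simp add: plogp_eq_kl_term)

lemma bin_entropy_concave:
  assumes "0 \<le> a" "a \<le> 1" "0 \<le> b" "b \<le> 1" "0 \<le> th" "th \<le> 1"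
  shows "th * bin_entropy a + (1 - th) * bin_entropy b \<le> bin_entropy (th * a + (1 - th) * b)"
proof -
  have "plogp (th * (1 - a) + (1 - th) * (1 - b)) \<le> th * plogp (1 - a) + (1 - th) * plogp (1 - b)"
    using plogp_convex assms by simp
  moreover have "th * (1 - a) + (1 - th) * (1 - b) = 1 - (th * a + (1 - th) * b)"
    by (simp add: algebra_simps)
  ultimately show ?thesis
    using plogp_convex[of a b th] assms unfolding bin_entropy_def by (simp add: algebra_simps)
qed

lemma plogp_nonpos:
  assumes "0 \<le> p" "p \<le> 1"
  shows "plogp p \<le> 0"
proof (cases "p = 0")
  case False
  then have "log 2 p \<le> 0" using assms by simp
  then show ?thesis using assms by (simp add: plogp_def mult_nonneg_nonpos)
qed (simp add: plogp_def)

lemma plogp_lower_bound: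
  assumes "0 \<le> p"
  shows "- 1 / ln 2 \<le> plogp p"
proof (cases "p = 0")
  case False
  then have p: "p > 0" using assms by simp
  have "ln (1 / p) \<le> 1 / p - 1" using p by (intro ln_le_minus_one) simp
  then have "- ln p \<le> 1 / p - 1" using p by (simp add: ln_div)
  then have "p * (- ln p) \<le> p * (1 / p - 1)" using p by (intro mult_left_mono) auto
  also have "p * (1 / p - 1) = 1 - p" using p by (simp add: field_simps)
  finally have "-1 \<le> p * ln p" using p by simp
  then have "-1 / ln 2 \<le> p * ln p / ln 2" by (intro divide_right_mono) auto
  then show ?thesis by (simp add: plogp_def log_def)
qed (simp add: plogp_def)

lemma bin_entropy_nonneg: "0 \<le> v \<Longrightarrow> v \<le> 1 \<Longrightarrow> 0 \<le> bin_entropy v"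
  using plogp_nonpos[of v] plogp_nonpos[of "1 - v"] by (simp add: bin_entropy_def)

lemma bin_entropy_le: "0 \<le> v \<Longrightarrow> v \<le> 1 \<Longrightarrow> bin_entropy v \<le> 2 / ln 2"
  using plogp_lower_bound[of v] plogp_lower_bound[of "1 - v"] by (simp add: bin_entropy_def)

lemma bin_entropy_one_minus: "bin_entropy (1 - v) = bin_entropy v"
  by (simp add: bin_entropy_def)

lemma continuous_on_bin_entropy: "continuous_on {0..1} bin_entropy"
proof (rule continuous_on_IccI)
  have e: "bin_entropy = (\<lambda>v. - (v * (ln v / ln 2) + (1 - v) * (ln (1 - v) / ln 2)))"
    by (rule ext) (simp add: bin_entropy_def plogp_def log_def)
  show "(bin_entropy \<longlongrightarrow> bin_entropy 0) (at_right 0)" unfolding e by simp real_asymp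
  show "(bin_entropy \<longlongrightarrow> bin_entropy 1) (at_left 1)" unfolding e by simp real_asymp
  fix x :: real assume "0 < x" "x < 1"
  then have "isCont bin_entropy x" unfolding e by (auto intro!: continuous_intros)
  then show "bin_entropy \<midarrow>x\<rightarrow> bin_entropy x" by (simp add: isCont_def)
qed simp

definition entropy_gap :: "real \<Rightarrow> real \<Rightarrow> real \<Rightarrow> real" where
  "entropy_gap a b t
     = bin_entropy (t * a + (1 - t) * b) - t * bin_entropy a - (1 - t) * bin_entropy b"

definition bin_cap :: "real \<Rightarrow> real \<Rightarrow> real" where
  "bin_cap a b = Sup (entropy_gap a b ` {0..1})"

lemma entropy_gap_le:
  assumes "0 \<le> a" "a \<le> 1" "0 \<le> b" "b \<le> 1" "0 \<le> t" "t \<le> 1"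
  shows "entropy_gap a b t \<le> 2 / ln 2"
proof -
  have "t * a + (1 - t) * b \<le> t * 1 + (1 - t) * 1"
    using assms by (intro add_mono mult_left_mono) auto
  then have "bin_entropy (t * a + (1 - t) * b) \<le> 2 / ln 2" using assms by (intro bin_entropy_le) auto
  moreover have "0 \<le> t * bin_entropy a" "0 \<le> (1 - t) * bin_entropy b"
    using assms bin_entropy_nonneg by simp_all
  ultimately show ?thesis unfolding entropy_gap_def by linarith
qed

lemma entropy_gap_le_bin_cap:
  assumes "0 \<le> a" "a \<le> 1" "0 \<le> b" "b \<le> 1" "0 \<le> t" "t \<le> 1"
  shows "entropy_gap a b t \<le> bin_cap a b"
  unfolding bin_cap_def using assms entropy_gap_le
  by (intro cSup_upper bdd_aboveI[of _ "2 / ln 2"]) auto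

lemma continuous_on_entropy_gap:
  assumes "0 \<le> t" "t \<le> 1"
  shows "continuous_on {0..1} (\<lambda>p. entropy_gap p 1 t)"
proof -
  have "(\<lambda>p. t * p + (1 - t) * 1) ` {0..1} \<subseteq> {0..1}"
    using assms by (auto intro: mult_right_le_one_le)
  then have "continuous_on {0..1} (\<lambda>p. bin_entropy (t * p + (1 - t) * 1))"
    by (intro continuous_on_compose2[OF continuous_on_bin_entropy] continuous_intros)
  then show ?thesis unfolding entropy_gap_def
    by (intro continuous_intros continuous_on_mult_left continuous_on_bin_entropy)
qed

lemma bin_cap_one_minus: "bin_cap (1 - b) (1 - a) = bin_cap a b"
proof -
  have gap: "entropy_gap (1 - b) (1 - a) t = entropy_gap a b (1 - t)" for t
  proof -
    have "t * (1 - b) + (1 - t) * (1 - a) = 1 - ((1 - t) * a + (1 - (1 - t)) * b)"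
      by (simp add: algebra_simps)
    then show ?thesis unfolding entropy_gap_def by (simp add: bin_entropy_one_minus)
  qed
  have "entropy_gap (1 - b) (1 - a) ` {0..1} = entropy_gap a b ` ((\<lambda>t. 1 - t) ` {0..1})"
    unfolding image_image using gap by (intro image_cong) auto
  then show ?thesis by (simp add: bin_cap_def)
qed

lemma segment_coordinate:
  fixes a b v :: real
  assumes "a \<le> v" "v \<le> b"
  obtains s where "0 \<le> s" "s \<le> 1" "v = s * a + (1 - s) * b"
proof (cases "a = b")
  case True
  then show ?thesis using assms by (intro that[of 0]) auto
next
  case False
  then have ba: "b - a > 0" using assms by simp
  show ?thesis
  proof (rule that[of "(b - v) / (b - a)"])
    show "0 \<le> (b - v) / (b - a)" "(b - v) / (b - a) \<le> 1" using assms ba by (auto simp: divide_simps)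
    have "t * a + (1 - t) * b = b - t * (b - a)" for t by (simp add: algebra_simps)
    then have "(b - v) / (b - a) * a + (1 - (b - v) / (b - a)) * b = b - (b - v) / (b - a) * (b - a)" .
    also have "\<dots> = v" using ba by simp
    finally show "v = (b - v) / (b - a) * a + (1 - (b - v) / (b - a)) * b" by (rule sym)
  qed
qed

text \<open>By concavity of the binary entropy, the Jensen gap of a distribution supported in
  \<open>[a, b]\<close> is at most that of the two-point distribution on \<open>{a, b}\<close> with the same mean.\<close>

lemma entropy_gap_mixture_le_bin_cap:
  assumes A: "finite A" and mu: "prob_dist A \<mu>" and ab: "0 \<le> a" "a \<le> b" "b \<le> 1"
    and v: "\<And>x. x \<in> A \<Longrightarrow> a \<le> v x \<and> v x \<le> b"
  shows "bin_entropy (\<Sum>x\<in>A. \<mu> x * v x) - (\<Sum>x\<in>A. \<mu> x * bin_entropy (v x)) \<le> bin_cap a b"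
proof -
  have mu0: "\<And>x. x \<in> A \<Longrightarrow> 0 \<le> \<mu> x" and mu1: "(\<Sum>x\<in>A. \<mu> x) = 1"
    using mu by (auto simp: prob_dist_def)
  have "\<forall>x\<in>A. \<exists>s. 0 \<le> s \<and> s \<le> 1 \<and> v x = s * a + (1 - s) * b"
    using v segment_coordinate by metis
  then obtain s where s: "\<forall>x\<in>A. 0 \<le> s x \<and> s x \<le> 1 \<and> v x = s x * a + (1 - s x) * b"
    by (auto dest!: bchoice)
  then have s01: "\<And>x. x \<in> A \<Longrightarrow> 0 \<le> s x \<and> s x \<le> 1"
    and vs: "\<And>x. x \<in> A \<Longrightarrow> v x = s x * a + (1 - s x) * b"
    by auto
  define t where "t = (\<Sum>x\<in>A. \<mu> x * s x)"
  have t0: "0 \<le> t" unfolding t_def using mu0 s01 by (intro sum_nonneg) auto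
  have "t \<le> (\<Sum>x\<in>A. \<mu> x * 1)"
    unfolding t_def using mu0 s01 by (intro sum_mono mult_left_mono) auto
  then have t1: "t \<le> 1" using mu1 by simp
  have mix: "(\<Sum>x\<in>A. \<mu> x * s x * f + (\<mu> x - \<mu> x * s x) * g) = t * f + (1 - t) * g" for f g
    by (simp add: sum.distrib sum_distrib_right[symmetric] sum_subtractf t_def mu1)
  have "(\<Sum>x\<in>A. \<mu> x * v x) = (\<Sum>x\<in>A. \<mu> x * s x * a + (\<mu> x - \<mu> x * s x) * b)"
  proof (intro sum.cong refl)
    fix x assume "x \<in> A"
    show "\<mu> x * v x = \<mu> x * s x * a + (\<mu> x - \<mu> x * s x) * b"
      unfolding vs[OF \<open>x \<in> A\<close>] by (simp add: algebra_simps)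
  qed
  then have mean: "(\<Sum>x\<in>A. \<mu> x * v x) = t * a + (1 - t) * b" by (simp add: mix)
  have "(\<Sum>x\<in>A. \<mu> x * s x * bin_entropy a + (\<mu> x - \<mu> x * s x) * bin_entropy b)
      \<le> (\<Sum>x\<in>A. \<mu> x * bin_entropy (v x))"
  proof (rule sum_mono)
    fix x assume x: "x \<in> A"
    have "s x * bin_entropy a + (1 - s x) * bin_entropy b \<le> bin_entropy (v x)"
      using bin_entropy_concave[of a b "s x"] s01[OF x] vs[OF x] ab by auto
    then have "\<mu> x * (s x * bin_entropy a + (1 - s x) * bin_entropy b) \<le> \<mu> x * bin_entropy (v x)"
      using mu0[OF x] by (simp add: mult_left_mono)
    then show "\<mu> x * s x * bin_entropy a + (\<mu> x - \<mu> x * s x) * bin_entropy b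
        \<le> \<mu> x * bin_entropy (v x)"
      by (simp add: algebra_simps)
  qed
  then have "t * bin_entropy a + (1 - t) * bin_entropy b \<le> (\<Sum>x\<in>A. \<mu> x * bin_entropy (v x))"
    by (simp add: mix)
  then have "bin_entropy (\<Sum>x\<in>A. \<mu> x * v x) - (\<Sum>x\<in>A. \<mu> x * bin_entropy (v x))
      \<le> entropy_gap a b t"
    using mean by (simp add: entropy_gap_def)
  also have "\<dots> \<le> bin_cap a b" using ab t0 t1 by (intro entropy_gap_le_bin_cap) auto
  finally show ?thesis .
qed

definition two_point :: "'a \<Rightarrow> 'a \<Rightarrow> real \<Rightarrow> 'a \<Rightarrow> real" where
  "two_point x1 x2 t x = (if x = x1 then t else 0) + (if x = x2 then 1 - t else 0)"

lemma sum_two_point: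
  assumes "finite A" "x1 \<in> A" "x2 \<in> A"
  shows "(\<Sum>x\<in>A. two_point x1 x2 t x * f x) = t * f x1 + (1 - t) * f x2"
proof -
  have "two_point x1 x2 t x * f x
      = (if x = x1 then t * f x else 0) + (if x = x2 then (1 - t) * f x else 0)" for x
    by (simp add: two_point_def distrib_right)
  then show ?thesis using assms by (simp add: sum.distrib sum.delta)
qed

lemma prob_dist_two_point:
  assumes "finite A" "x1 \<in> A" "x2 \<in> A" "0 \<le> t" "t \<le> 1"
  shows "prob_dist A (two_point x1 x2 t)"
  using sum_two_point[OF assms(1-3), of t "\<lambda>_. 1"] assms(4,5)
  by (simp add: prob_dist_def two_point_def)

lemma bin_cap_mono:
  assumes "0 \<le> a" "a \<le> a'" "a' \<le> b'" "b' \<le> b" "b \<le> 1"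
  shows "bin_cap a' b' \<le> bin_cap a b"
  unfolding bin_cap_def[of a' b']
proof (rule cSup_least)
  fix y assume "y \<in> entropy_gap a' b' ` {0..1}"
  then obtain t where t: "0 \<le> t" "t \<le> 1" and y: "y = entropy_gap a' b' t" by auto
  let ?v = "\<lambda>x::nat. if x = 0 then a' else b'"
  have A: "finite {0::nat, 1}" "0 \<in> {0::nat, 1}" "1 \<in> {0::nat, 1}" by auto
  have "bin_entropy (\<Sum>x\<in>{0, 1}. two_point 0 1 t x * ?v x)
      - (\<Sum>x\<in>{0, 1}. two_point 0 1 t x * bin_entropy (?v x)) \<le> bin_cap a b"
    using assms by (intro entropy_gap_mixture_le_bin_cap prob_dist_two_point[OF A t]) auto
  then show "y \<le> bin_cap a b"
    unfolding y entropy_gap_def sum_two_point[OF A] by simp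
qed auto

section \<open>Mutual information of binary-output channels\<close>

lemma atLeastLessThan_two: "{0..<2::nat} = {0, 1}"
  by auto

lemma out_dist_ge:
  assumes "finite A" "x \<in> A" "\<forall>x\<in>A. 0 \<le> \<mu> x" "\<forall>x\<in>A. 0 \<le> W x b"
  shows "\<mu> x * W x b \<le> out_dist A \<mu> W b"
  unfolding out_dist_def using assms by (intro member_le_sum) auto

lemma mutual_info_entropy_form:
  assumes A: "finite A" and mu: "prob_dist A \<mu>" and W: "is_channel A B W"
  shows "mutual_info A B \<mu> W
    = (\<Sum>x\<in>A. \<mu> x * (\<Sum>b\<in>B. plogp (W x b))) - (\<Sum>b\<in>B. plogp (out_dist A \<mu> W b))"
proof -
  let ?q = "out_dist A \<mu> W"
  have mu0: "\<forall>x\<in>A. 0 \<le> \<mu> x" using mu by (simp add: prob_dist_def)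
  have W0: "\<forall>x\<in>A. \<forall>b\<in>B. 0 \<le> W x b" using W by (simp add: is_channel_def prob_dist_def)
  have row: "(if \<mu> x = 0 then 0 else \<mu> x * KL B (W x) ?q)
      = \<mu> x * (\<Sum>b\<in>B. plogp (W x b)) - (\<Sum>b\<in>B. \<mu> x * W x b * log 2 (?q b))"
    if x: "x \<in> A" for x
  proof (cases "\<mu> x = 0")
    case False
    then have mpos: "\<mu> x > 0" using mu0 x by force
    have "KL B (W x) ?q = (\<Sum>b\<in>B. plogp (W x b) - W x b * log 2 (?q b))"
      unfolding KL_def
    proof (rule sum.cong)
      fix b assume b: "b \<in> B"
      show "(if W x b = 0 then 0 else W x b * log 2 (W x b / ?q b))
          = plogp (W x b) - W x b * log 2 (?q b)"
      proof (cases "W x b = 0")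
        case False
        then have wpos: "W x b > 0" using W0 x b by force
        have "\<mu> x * W x b \<le> ?q b" using out_dist_ge[OF A x mu0, of W b] W0 b by auto
        then have "?q b > 0" using mpos wpos by (smt (verit) mult_pos_pos)
        then have "log 2 (W x b / ?q b) = log 2 (W x b) - log 2 (?q b)"
          using wpos by (simp add: log_divide)
        then show ?thesis using False by (simp add: plogp_def right_diff_distrib)
      qed (simp add: plogp_def)
    qed simp
    then show ?thesis
      using False by (simp add: sum_subtractf right_diff_distrib sum_distrib_left mult.assoc)
  qed simp
  have "mutual_info A B \<mu> W
      = (\<Sum>x\<in>A. \<mu> x * (\<Sum>b\<in>B. plogp (W x b))) - (\<Sum>x\<in>A. \<Sum>b\<in>B. \<mu> x * W x b * log 2 (?q b))"
    unfolding mutual_info_def by (simp add: row sum_subtractf)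
  also have "(\<Sum>x\<in>A. \<Sum>b\<in>B. \<mu> x * W x b * log 2 (?q b)) = (\<Sum>b\<in>B. plogp (?q b))"
    by (subst sum.swap) (simp add: plogp_def out_dist_def sum_distrib_right)
  finally show ?thesis .
qed

lemma binary_channel_row:
  fixes W :: "'a \<Rightarrow> nat \<Rightarrow> real"
  assumes "is_channel A {0..<2} W" "x \<in> A"
  shows "W x 1 = 1 - W x 0" "0 \<le> W x 0" "W x 0 \<le> 1"
  using assms by (auto simp: is_channel_def prob_dist_def atLeastLessThan_two)

lemma mutual_info_binary:
  fixes W :: "'a \<Rightarrow> nat \<Rightarrow> real"
  assumes A: "finite A" and mu: "prob_dist A \<mu>" and W: "is_channel A {0..<2} W"
  shows "mutual_info A {0..<2} \<mu> W
    = bin_entropy (\<Sum>x\<in>A. \<mu> x * W x 0) - (\<Sum>x\<in>A. \<mu> x * bin_entropy (W x 0))"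
proof -
  have "out_dist A \<mu> W 1 = (\<Sum>x\<in>A. \<mu> x - \<mu> x * W x 0)"
    unfolding out_dist_def using binary_channel_row(1)[OF W]
    by (intro sum.cong) (simp_all add: right_diff_distrib)
  then have q1: "out_dist A \<mu> W 1 = 1 - out_dist A \<mu> W 0"
    using mu by (simp add: sum_subtractf out_dist_def prob_dist_def)
  have "(\<Sum>x\<in>A. \<mu> x * (plogp (W x 0) + plogp (W x 1))) = - (\<Sum>x\<in>A. \<mu> x * bin_entropy (W x 0))"
    unfolding sum_negf[symmetric]
  proof (intro sum.cong refl)
    fix x assume x: "x \<in> A"
    show "\<mu> x * (plogp (W x 0) + plogp (W x 1)) = - (\<mu> x * bin_entropy (W x 0))"
      unfolding binary_channel_row(1)[OF W x] bin_entropy_def by (simp add: algebra_simps)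
  qed
  then show ?thesis
    using mutual_info_entropy_form[OF A mu W] q1
    by (simp add: atLeastLessThan_two bin_entropy_def out_dist_def)
qed

lemma capacity_binary:
  fixes W :: "'a \<Rightarrow> nat \<Rightarrow> real"
  assumes A: "finite A" and W: "is_channel A {0..<2} W" and x12: "x1 \<in> A" "x2 \<in> A"
    and extreme: "\<And>x. x \<in> A \<Longrightarrow> W x1 0 \<le> W x 0 \<and> W x 0 \<le> W x2 0"
  shows "capacity A {0..<2} W = bin_cap (W x1 0) (W x2 0)"
proof -
  let ?a = "W x1 0" and ?b = "W x2 0"
  let ?I = "{mutual_info A {0..<2} \<mu> W | \<mu>. prob_dist A \<mu>}"
  have ab: "0 \<le> ?a" "?a \<le> ?b" "?b \<le> 1"
    using binary_channel_row[OF W] extreme x12 by auto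
  have le: "y \<le> bin_cap ?a ?b" if "y \<in> ?I" for y
    using that ab extreme mutual_info_binary[OF A _ W]
      entropy_gap_mixture_le_bin_cap[OF A _ ab, of _ "\<lambda>x. W x 0"] by auto
  have "bin_cap ?a ?b \<le> Sup ?I"
    unfolding bin_cap_def
  proof (rule cSup_least)
    fix y assume "y \<in> entropy_gap ?a ?b ` {0..1}"
    then obtain t where t: "0 \<le> t" "t \<le> 1" and y: "y = entropy_gap ?a ?b t" by auto
    have pd: "prob_dist A (two_point x1 x2 t)" using prob_dist_two_point[OF A x12 t] .
    have "y = mutual_info A {0..<2} (two_point x1 x2 t) W"
      unfolding mutual_info_binary[OF A pd W] y entropy_gap_def sum_two_point[OF A x12]
      by (simp add: algebra_simps)
    then show "y \<le> Sup ?I" using pd le by (intro cSup_upper bdd_aboveI) auto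
  qed auto
  moreover have "Sup ?I \<le> bin_cap ?a ?b"
    using le prob_dist_two_point[OF A x12, of 0] by (intro cSup_least) auto
  ultimately show ?thesis unfolding capacity_def by simp
qed

lemma mutual_info_kl_terms:
  "mutual_info A B \<mu> W = (\<Sum>x\<in>A. \<Sum>b\<in>B. kl_term (\<mu> x * W x b) (\<mu> x * out_dist A \<mu> W b))"
  unfolding mutual_info_def
proof (intro sum.cong refl)
  fix x
  show "(if \<mu> x = 0 then 0 else \<mu> x * KL B (W x) (out_dist A \<mu> W))
      = (\<Sum>b\<in>B. kl_term (\<mu> x * W x b) (\<mu> x * out_dist A \<mu> W b))"
    unfolding KL_def sum_distrib_left
    by (cases "\<mu> x = 0") (auto simp: kl_term_def mult_divide_mult_cancel_left intro!: sum.cong)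
qed

lemma mutual_info_convex_channel:
  assumes A: "finite A" and mu0: "\<forall>x\<in>A. 0 \<le> \<mu> x"
    and W1: "\<forall>x\<in>A. \<forall>b\<in>B. 0 \<le> W1 x b" and W2: "\<forall>x\<in>A. \<forall>b\<in>B. 0 \<le> W2 x b"
    and th: "0 \<le> th" "th \<le> 1"
  shows "mutual_info A B \<mu> (\<lambda>x b. th * W1 x b + (1 - th) * W2 x b)
         \<le> th * mutual_info A B \<mu> W1 + (1 - th) * mutual_info A B \<mu> W2"
proof -
  let ?W = "\<lambda>x b. th * W1 x b + (1 - th) * W2 x b"
  have q: "out_dist A \<mu> ?W b = th * out_dist A \<mu> W1 b + (1 - th) * out_dist A \<mu> W2 b" for b
    unfolding out_dist_def sum_distrib_left sum.distrib[symmetric]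
    by (intro sum.cong) (simp_all add: algebra_simps)
  have pos: "\<mu> x * out_dist A \<mu> V b > 0"
    if x: "x \<in> A" and b: "b \<in> B" and V: "\<forall>x\<in>A. \<forall>b\<in>B. 0 \<le> V x b" and p: "\<mu> x * V x b > 0"
    for x b V
  proof -
    have "\<mu> x * V x b \<le> out_dist A \<mu> V b" using out_dist_ge[OF A x mu0, of V b] V b by auto
    moreover have "\<mu> x > 0" using p mu0 x by (auto simp: zero_less_mult_iff)
    ultimately show ?thesis using p by simp
  qed
  have od: "0 \<le> out_dist A \<mu> V b" if "\<forall>x\<in>A. \<forall>b\<in>B. 0 \<le> V x b" "b \<in> B" for V b
    unfolding out_dist_def using mu0 that by (auto intro!: sum_nonneg)
  have "mutual_info A B \<mu> ?W = (\<Sum>x\<in>A. \<Sum>b\<in>B.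
      kl_term (th * (\<mu> x * W1 x b) + (1 - th) * (\<mu> x * W2 x b))
        (th * (\<mu> x * out_dist A \<mu> W1 b) + (1 - th) * (\<mu> x * out_dist A \<mu> W2 b)))"
    unfolding mutual_info_kl_terms q by (simp add: algebra_simps)
  also have "\<dots> \<le> (\<Sum>x\<in>A. \<Sum>b\<in>B. th * kl_term (\<mu> x * W1 x b) (\<mu> x * out_dist A \<mu> W1 b)
      + (1 - th) * kl_term (\<mu> x * W2 x b) (\<mu> x * out_dist A \<mu> W2 b))"
    using mu0 W1 W2 od[OF W1] od[OF W2] pos[OF _ _ W1] pos[OF _ _ W2]
    by (intro sum_mono kl_term_convex th) auto
  also have "\<dots> = th * mutual_info A B \<mu> W1 + (1 - th) * mutual_info A B \<mu> W2"
    unfolding mutual_info_kl_terms by (simp add: sum.distrib sum_distrib_left)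
  finally show ?thesis .
qed

definition bin_chan :: "real \<Rightarrow> real \<Rightarrow> nat \<Rightarrow> nat \<Rightarrow> real" where
  "bin_chan a b x y = (if x = 0 then (if y = 0 then a else 1 - a) else (if y = 0 then b else 1 - b))"

lemma is_channel_bin_chan:
  "0 \<le> a \<Longrightarrow> a \<le> 1 \<Longrightarrow> 0 \<le> b \<Longrightarrow> b \<le> 1 \<Longrightarrow> is_channel {0..<2} {0..<2} (bin_chan a b)"
  by (auto simp: is_channel_def prob_dist_def bin_chan_def atLeastLessThan_two)

lemma capacity_bin_chan:
  assumes "0 \<le> a" "a \<le> 1" "0 \<le> b" "b \<le> 1"
  shows "capacity {0..<2} {0..<2} (bin_chan a b) = bin_cap (min a b) (max a b)"
proof (cases "a \<le> b")
  case True
  then show ?thesis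
    using capacity_binary[OF _ is_channel_bin_chan[OF assms], of 0 1] by (auto simp: bin_chan_def)
next
  case False
  then show ?thesis
    using capacity_binary[OF _ is_channel_bin_chan[OF assms], of 1 0] by (auto simp: bin_chan_def)
qed

lemma entropy_gap_eq_mutual_info:
  assumes "0 \<le> a" "a \<le> 1" "0 \<le> b" "b \<le> 1" "0 \<le> t" "t \<le> 1"
  shows "entropy_gap a b t = mutual_info {0..<2} {0..<2} (two_point 0 1 t) (bin_chan a b)"
proof -
  have A: "finite {0..<2::nat}" "(0::nat) \<in> {0..<2}" "(1::nat) \<in> {0..<2}" by auto
  show ?thesis
    unfolding mutual_info_binary[OF A(1) prob_dist_two_point[OF A assms(5,6)]
        is_channel_bin_chan[OF assms(1-4)]] sum_two_point[OF A]
    by (simp add: entropy_gap_def bin_chan_def algebra_simps)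
qed

text \<open>The channel with output-\<open>0\<close> probabilities \<open>a\<close> and \<open>1 - b\<close> is a mixture of the channels
  with probabilities \<open>(a + b, 1)\<close> and \<open>(0, 1 - a - b)\<close>, whose capacities agree by symmetry;
  convexity of mutual information in the channel does the rest.\<close>

lemma bin_cap_le_bin_cap_sum:
  assumes "0 \<le> a" "0 \<le> b" "a + b \<le> 1"
  shows "bin_cap a (1 - b) \<le> bin_cap (a + b) 1"
proof (cases "a + b = 0")
  case True
  then have "a = 0" "b = 0" using assms by auto
  then show ?thesis by simp
next
  case False
  define s where "s = a + b"
  have s: "s > 0" "s \<le> 1" using False assms by (auto simp: s_def)
  define th where "th = a / s"
  have th: "0 \<le> th" "th \<le> 1" using assms s by (auto simp: th_def s_def divide_simps)
  have ths: "th * s = a" "s * th = a" using s by (simp_all add: th_def)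
  have bs: "b = s - a" by (simp add: s_def)
  have mix: "bin_chan a (1 - b) = (\<lambda>x y. th * bin_chan s 1 x y + (1 - th) * bin_chan 0 (1 - s) x y)"
    unfolding bin_chan_def bs by (intro ext) (auto simp: algebra_simps ths)
  show ?thesis
    unfolding bin_cap_def[of a "1 - b"]
  proof (rule cSup_least)
    fix y assume "y \<in> entropy_gap a (1 - b) ` {0..1}"
    then obtain t where t: "0 \<le> t" "t \<le> 1" and y: "y = entropy_gap a (1 - b) t" by auto
    have "y = mutual_info {0..<2} {0..<2} (two_point 0 1 t) (bin_chan a (1 - b))"
      unfolding y using assms t by (intro entropy_gap_eq_mutual_info) auto
    also have "\<dots> \<le> th * mutual_info {0..<2} {0..<2} (two_point 0 1 t) (bin_chan s 1)
        + (1 - th) * mutual_info {0..<2} {0..<2} (two_point 0 1 t) (bin_chan 0 (1 - s))"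
      unfolding mix using s t
      by (intro mutual_info_convex_channel th) (auto simp: two_point_def bin_chan_def)
    also have "\<dots> = th * entropy_gap s 1 t + (1 - th) * entropy_gap 0 (1 - s) t"
      using s t by (simp add: entropy_gap_eq_mutual_info)
    also have "\<dots> \<le> th * bin_cap s 1 + (1 - th) * bin_cap 0 (1 - s)"
      using s t th by (intro add_mono mult_left_mono entropy_gap_le_bin_cap) auto
    also have "\<dots> = bin_cap (a + b) 1"
      using bin_cap_one_minus[where a = s and b = 1] by (simp add: s_def algebra_simps)
    finally show "y \<le> bin_cap (a + b) 1" .
  qed auto
qed

lemma bin_cap_le_if_approx:
  assumes P: "0 \<le> P" "P \<le> 1"
    and approx: "\<And>d. d > 0 \<Longrightarrow> \<exists>p\<in>{0..1}. dist p P < d \<and> bin_cap p 1 \<le> S"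
  shows "bin_cap P 1 \<le> S"
  unfolding bin_cap_def
proof (rule cSup_least)
  fix y assume "y \<in> entropy_gap P 1 ` {0..1}"
  then obtain t where t: "0 \<le> t" "t \<le> 1" and y: "y = entropy_gap P 1 t" by auto
  show "y \<le> S"
  proof (rule ccontr)
    assume "\<not> y \<le> S"
    then have "y - S > 0" by simp
    moreover have "\<forall>e>0. \<exists>d>0. \<forall>p\<in>{0..1}. dist p P < d \<longrightarrow> dist (entropy_gap p 1 t) y < e"
      using continuous_on_entropy_gap[OF t] P unfolding continuous_on_iff y by simp
    ultimately obtain d where "d > 0"
      and d: "\<forall>p\<in>{0..1}. dist p P < d \<longrightarrow> dist (entropy_gap p 1 t) y < y - S"
      by blast
    then obtain p where p: "p \<in> {0..1}" "dist p P < d" "bin_cap p 1 \<le> S" using approx by blast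
    have "entropy_gap p 1 t \<le> bin_cap p 1" using p t by (intro entropy_gap_le_bin_cap) auto
    then show False using d p by (auto simp: dist_real_def abs_less_iff)
  qed
qed auto

section \<open>Deterministic channels and the rank-one maps\<close>

definition const_map :: "nat \<Rightarrow> nat \<Rightarrow> nat \<Rightarrow> nat" where
  "const_map m k = (\<lambda>x\<in>{0..<m}. k)"

lemma finite_det_maps: "finite (det_maps m n)"
  by (simp add: det_maps_def finite_PiE)

lemma det_map_less: "D \<in> det_maps m n \<Longrightarrow> x < m \<Longrightarrow> D x < n"
  by (auto simp: det_maps_def PiE_iff)

lemma const_map_in_det_maps: "k < n \<Longrightarrow> const_map m k \<in> det_maps m n"
  by (auto simp: det_maps_def const_map_def)

lemma const_map_eq_iff: "m > 0 \<Longrightarrow> const_map m k = const_map m l \<longleftrightarrow> k = l"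
  by (auto simp: const_map_def dest: fun_cong[of _ _ 0])

lemma det_map_eq_const_map_iff:
  "D \<in> det_maps m n \<Longrightarrow> D = const_map m k \<longleftrightarrow> (\<forall>x<m. D x = k)"
  by (auto simp: det_maps_def const_map_def PiE_iff extensional_def fun_eq_iff)

lemma binary_map_neq_const_map:
  assumes D: "D \<in> det_maps m 2" and "D \<noteq> const_map m k" "k < 2"
  obtains x where "x < m" "D x = 1 - k"
proof -
  obtain x where "x < m" "D x \<noteq> k" using assms det_map_eq_const_map_iff[OF D] by blast
  moreover have "D x < 2" using det_map_less[OF D \<open>x < m\<close>] .
  ultimately show ?thesis using assms(3) by (intro that[of x]) auto
qed

lemma (in vec_space) lin_indpt_if_separated:
  assumes U: "U \<subseteq> carrier_vec n"
    and sep: "\<And>v. v \<in> U \<Longrightarrow> \<exists>i<n. v $ i \<noteq> 0 \<and> (\<forall>u\<in>U. u \<noteq> v \<longrightarrow> u $ i = 0)"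
  shows "lin_indpt U"
proof
  assume "lin_dep U"
  then obtain A a v where A: "finite A" "A \<subseteq> U" and lc: "lincomb a A = 0\<^sub>v n"
    and v: "v \<in> A" "a v \<noteq> 0"
    unfolding lin_dep_def by blast
  obtain i where i: "i < n" "v $ i \<noteq> 0" "\<forall>u\<in>U. u \<noteq> v \<longrightarrow> u $ i = 0" using sep A v by blast
  have "lincomb a A $ i = (\<Sum>x\<in>A. a x * x $ i)" using lincomb_index[OF i(1)] A U by blast
  also have "\<dots> = (\<Sum>x\<in>A. if x = v then a v * v $ i else 0)"
    using i A by (intro sum.cong) auto
  also have "\<dots> = a v * v $ i" using A v by simp
  finally show False using lc i v by simp
qed

text \<open>Columns of the 0-1 matrix of \<open>D\<close> indexed by values of \<open>D\<close> are separated by the rows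
  of their preimages, hence independent.\<close>

lemma card_le_det_rank:
  assumes D: "D \<in> det_maps m n" and J: "J \<subseteq> D ` {0..<m}"
  shows "card J \<le> det_rank m n D"
proof -
  define A where "A = det_matrix m n D"
  have A: "A \<in> carrier_mat m n" by (simp add: A_def det_matrix_def)
  have J_less: "j < n" if "j \<in> J" for j using that J det_map_less[OF D] by auto
  have col: "col A j $ x = det_entry D x j" if "x < m" "j < n" for x j
    using that A by (simp add: A_def det_matrix_def)
  have inj: "inj_on (col A) J"
  proof
    fix j j' assume jj: "j \<in> J" "j' \<in> J" "col A j = col A j'"
    obtain x where x: "x < m" "D x = j" using jj(1) J by auto
    show "j = j'" using col[OF x(1) J_less[OF jj(1)]] col[OF x(1) J_less[OF jj(2)]] jj(3) x
      by (simp add: det_entry_def split: if_splits)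
  qed
  have "card (col A ` J) \<le> vec_space.rank m A"
  proof (rule vec_space.rank_ge_card_indpt[OF A])
    show "col A ` J \<subseteq> set (cols A)" using A J_less by (auto simp: cols_def)
    show "\<not> module.lin_dep class_ring (module_vec TYPE(real) m) (col A ` J)"
    proof (rule vec_space.lin_indpt_if_separated)
      show "col A ` J \<subseteq> carrier_vec m" using A by auto
      fix v assume "v \<in> col A ` J"
      then obtain j where v: "v = col A j" "j \<in> J" by blast
      then obtain x where x: "x < m" "D x = j" using J by auto
      show "\<exists>i<m. v $ i \<noteq> 0 \<and> (\<forall>u\<in>col A ` J. u \<noteq> v \<longrightarrow> u $ i = 0)"
        using x v col J_less by (intro exI[of _ x]) (auto simp: det_entry_def)
    qed
  qed
  then show ?thesis using inj by (simp add: card_image det_rank_def A_def)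
qed

lemma det_rank_eq_1_iff:
  assumes m: "m > 0" and D: "D \<in> det_maps m n"
  shows "det_rank m n D = 1 \<longleftrightarrow> (\<exists>k<n. D = const_map m k)"
proof
  assume rank: "det_rank m n D = 1"
  have "D x = D 0" if x: "x < m" for x
  proof (rule ccontr)
    assume "D x \<noteq> D 0"
    then have "card {D 0, D x} \<le> det_rank m n D" using m x by (intro card_le_det_rank[OF D]) auto
    then show False using rank \<open>D x \<noteq> D 0\<close> by simp
  qed
  then show "\<exists>k<n. D = const_map m k"
    using det_map_less[OF D m] det_map_eq_const_map_iff[OF D] by blast
next
  assume "\<exists>k<n. D = const_map m k"
  then obtain k where k: "k < n" "D = const_map m k" by blast
  have "det_rank m n D \<le> 1"
    unfolding det_rank_def det_matrix_def
    by (rule vec_space.rank_le_1_product_entries[of _ m n "\<lambda>_. 1" "\<lambda>c. if c = k then 1 else 0"])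
      (auto simp: k const_map_def det_entry_def)
  moreover have "card {k} \<le> det_rank m n D"
    using m k by (intro card_le_det_rank[OF D]) (auto simp: const_map_def)
  ultimately show "det_rank m n D = 1" by simp
qed

section \<open>The channel \<open>V\<^sup>\<lambda>\<close>\<close>

lemma Lambda_prob_dist: "lam \<in> Lambda m n W \<Longrightarrow> prob_dist (det_maps m n) lam"
  by (simp add: Lambda_def)

lemma Lambda_marginal:
  "lam \<in> Lambda m n W \<Longrightarrow> x < m \<Longrightarrow> y < n \<Longrightarrow> W x y = (\<Sum>D\<in>det_maps m n. lam D * det_entry D x y)"
  by (simp add: Lambda_def)


lemma const_map_weight_le:
  assumes lam: "prob_dist (det_maps m n) lam" and g: "g (const_map m y) < m" and y: "y < n"
  shows "lam (const_map m y) \<le> (\<Sum>D\<in>det_maps m n. lam D * det_entry D (g D) y)"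
proof -
  have "lam (const_map m y) * det_entry (const_map m y) (g (const_map m y)) y
      \<le> (\<Sum>D\<in>det_maps m n. lam D * det_entry D (g D) y)"
    using lam y by (intro member_le_sum finite_det_maps const_map_in_det_maps)
      (auto simp: prob_dist_def det_entry_def)
  then show ?thesis using g by (simp add: const_map_def det_entry_def)
qed

lemma Lambda_const_map_weight_le:
  assumes "lam \<in> Lambda m n W" "x < m" "y < n"
  shows "lam (const_map m y) \<le> W x y"
  using const_map_weight_le[OF Lambda_prob_dist[OF assms(1)], of "\<lambda>_. x"] assms
  by (simp add: Lambda_marginal)

lemma const_map_weight_nonneg:
  "prob_dist (det_maps m n) lam \<Longrightarrow> k < n \<Longrightarrow> 0 \<le> lam (const_map m k)"
  using const_map_in_det_maps by (auto simp: prob_dist_def)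

lemma const_map_weights_le:
  assumes lam: "prob_dist (det_maps m n) lam" and "m > 0" "k < n" "l < n" "k \<noteq> l"
  shows "lam (const_map m k) + lam (const_map m l) \<le> 1"
proof -
  have lam0: "0 \<le> lam D" if "D \<in> det_maps m n" for D using lam that by (simp add: prob_dist_def)
  have "sum lam {const_map m k, const_map m l} \<le> sum lam (det_maps m n)"
    using lam0 assms by (intro sum_mono2 finite_det_maps) (auto intro: const_map_in_det_maps)
  then show ?thesis
    using assms const_map_eq_iff[of m k l] by (simp add: prob_dist_def)
qed

lemma strategy_less: "u \<in> strategies m n \<Longrightarrow> D \<in> det_maps m n \<Longrightarrow> u D < m"
  by (auto simp: strategies_def PiE_iff)

lemma finite_strategies: "finite (strategies m n)"
  by (simp add: strategies_def finite_PiE finite_det_maps)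

lemma is_channel_V_chan:
  assumes lam: "prob_dist (det_maps m n) lam"
  shows "is_channel (strategies m n) {0..<n} (V_chan m n lam)"
  unfolding is_channel_def prob_dist_def
proof (intro ballI conjI)
  fix u assume u: "u \<in> strategies m n"
  show "0 \<le> V_chan m n lam u y" for y
    using lam by (auto simp: V_chan_def det_entry_def prob_dist_def intro!: sum_nonneg)
  have "sum (V_chan m n lam u) {0..<n}
      = (\<Sum>D\<in>det_maps m n. lam D * (\<Sum>y\<in>{0..<n}. det_entry D (u D) y))"
    unfolding V_chan_def sum_distrib_left by (rule sum.swap)
  also have "\<dots> = sum lam (det_maps m n)"
    using det_map_less strategy_less[OF u] by (intro sum.cong) (auto simp: det_entry_def)
  finally show "sum (V_chan m n lam u) {0..<n} = 1" using lam by (simp add: prob_dist_def)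
qed

lemma V_chan_ge_const_map_weight:
  assumes "prob_dist (det_maps m n) lam" "u \<in> strategies m n" "y < n"
  shows "lam (const_map m y) \<le> V_chan m n lam u y"
  unfolding V_chan_def
  by (rule const_map_weight_le[OF assms(1)])
    (use strategy_less[OF assms(2) const_map_in_det_maps[OF assms(3)]] assms(3) in auto)

lemma V_chan_attains_const_map_weight:
  assumes m: "m > 0" and y: "y < 2"
  obtains u where "u \<in> strategies m 2" "V_chan m 2 lam u y = lam (const_map m y)"
proof -
  define u where "u = (\<lambda>D\<in>det_maps m 2.
    if D = const_map m y then 0 else (SOME x. x < m \<and> D x = 1 - y))"
  have u: "u D < m \<and> (D \<noteq> const_map m y \<longrightarrow> D (u D) = 1 - y)" if D: "D \<in> det_maps m 2" for D
  proof (cases "D = const_map m y")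
    case False
    then obtain x where "x < m" "D x = 1 - y" using binary_map_neq_const_map[OF D _ y] by blast
    then show ?thesis using False D someI[of "\<lambda>x. x < m \<and> D x = 1 - y"] by (auto simp: u_def)
  qed (use m D in \<open>simp add: u_def\<close>)
  have "u \<in> strategies m 2" using u by (auto simp: strategies_def u_def PiE_iff)
  moreover have "V_chan m 2 lam u y = (\<Sum>D\<in>det_maps m 2. if D = const_map m y then lam D else 0)"
    unfolding V_chan_def
  proof (intro sum.cong refl)
    fix D assume D: "D \<in> det_maps m 2"
    show "lam D * det_entry D (u D) y = (if D = const_map m y then lam D else 0)"
    proof (cases "D = const_map m y")
      case True
      then have "D (u D) = y" using u[OF D] by (simp add: const_map_def)
      then show ?thesis using True by (simp add: det_entry_def)
    next
      case False
      then have "D (u D) = 1 - y" using u[OF D] by simp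
      then show ?thesis using False y by (auto simp: det_entry_def less_2_cases_iff)
    qed
  qed
  ultimately show ?thesis
    using that const_map_in_det_maps[OF y] finite_det_maps by simp
qed

lemma C10_binary:
  assumes m: "m > 0" and lam: "prob_dist (det_maps m 2) lam"
  shows "C10 m 2 lam = bin_cap (lam (const_map m 0)) (1 - lam (const_map m 1))"
proof -
  have chan: "is_channel (strategies m 2) {0..<2} (V_chan m 2 lam)"
    by (rule is_channel_V_chan[OF lam])
  obtain u0 where u0: "u0 \<in> strategies m 2" "V_chan m 2 lam u0 0 = lam (const_map m 0)"
    using V_chan_attains_const_map_weight[OF m, where y = 0 and lam = lam] by auto
  obtain u1 where u1: "u1 \<in> strategies m 2" "V_chan m 2 lam u1 1 = lam (const_map m 1)"
    using V_chan_attains_const_map_weight[OF m, where y = 1 and lam = lam] by auto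
  note V1 = binary_channel_row(1)[OF chan]
  have "V_chan m 2 lam u0 0 \<le> V_chan m 2 lam u 0 \<and> V_chan m 2 lam u 0 \<le> V_chan m 2 lam u1 0"
    if u: "u \<in> strategies m 2" for u
    using V_chan_ge_const_map_weight[OF lam u, of 0] V_chan_ge_const_map_weight[OF lam u, of 1]
      u0 u1 V1[OF u] V1[OF u1(1)] by simp
  then have "capacity (strategies m 2) {0..<2} (V_chan m 2 lam)
      = bin_cap (V_chan m 2 lam u0 0) (V_chan m 2 lam u1 0)"
    by (intro capacity_binary[OF finite_strategies chan u0(1) u1(1)])
  then show ?thesis unfolding C10_def using u0 u1 V1[OF u1(1)] by simp
qed

section \<open>Threshold decompositions\<close>

lemma prob_dist_pushforward:
  fixes r :: "'i \<Rightarrow> real"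
  assumes "finite I" "finite S" "f ` I \<subseteq> S" "\<And>i. i \<in> I \<Longrightarrow> 0 \<le> r i" "sum r I = 1"
  shows "prob_dist S (\<lambda>s. sum r {i\<in>I. f i = s})"
  unfolding prob_dist_def using sum.group[OF assms(1-3), of r] assms(4,5)
  by (auto intro!: sum_nonneg)

lemma sum_pushforward:
  fixes r :: "'i \<Rightarrow> real"
  assumes "finite I" "finite S" "f ` I \<subseteq> S"
  shows "(\<Sum>s\<in>S. sum r {i\<in>I. f i = s} * g s) = (\<Sum>i\<in>I. r i * g (f i))"
proof -
  have "(\<Sum>s\<in>S. sum r {i\<in>I. f i = s} * g s) = (\<Sum>s\<in>S. \<Sum>i\<in>{i\<in>I. f i = s}. r i * g (f i))"
    by (intro sum.cong refl) (simp add: sum_distrib_right)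
  also have "\<dots> = (\<Sum>i\<in>I. r i * g (f i))" by (rule sum.group[OF assms])
  finally show ?thesis .
qed

text \<open>A finite set \<open>T \<subseteq> [0, 1]\<close> containing \<open>0\<close> and \<open>1\<close> supports a discrete probability
  measure, with atoms at the points of \<open>T\<close> below \<open>1\<close>, whose distribution function agrees
  with the identity on \<open>T\<close>: the atom at a point is the gap to its successor in \<open>T\<close>.\<close>

lemma finite_threshold_weights:
  fixes T :: "real set"
  assumes T: "finite T" "0 \<in> T" "1 \<in> T" "T \<subseteq> {0..1}"
  obtains I :: "nat set" and r s :: "nat \<Rightarrow> real"
  where "finite I" "\<And>i. i \<in> I \<Longrightarrow> 0 \<le> r i" "sum r I = 1"
    "\<And>z. z \<in> T \<Longrightarrow> sum r {i\<in>I. s i < z} = z"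
proof -
  define ts where "ts = sorted_list_of_set T"
  define L where "L = length ts"
  have sorted: "sorted_wrt (<) ts" by (simp add: ts_def)
  have set_ts: "set ts = T" using T(1) by (simp add: ts_def)
  have index: "\<exists>k<L. ts ! k = z" if "z \<in> T" for z
    using that set_ts in_set_conv_nth[of z ts] unfolding L_def by blast
  have in_T: "ts ! k \<in> T" if "k < L" for k
    using that set_ts nth_mem[of k ts] unfolding L_def by blast
  have less_iff: "ts ! i < ts ! j \<longleftrightarrow> i < j" if "i < L" "j < L" for i j
    using that sorted_wrt_nth_less[OF sorted, of i j] sorted_wrt_nth_less[OF sorted, of j i]
    by (cases i j rule: linorder_cases) (auto simp: L_def)
  obtain k0 where k0: "k0 < L" "ts ! k0 = 0" using index T(2) by blast
  obtain k1 where k1: "k1 < L" "ts ! k1 = 1" using index T(3) by blast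
  have first: "ts ! 0 = 0"
    using less_iff[of k0 0] k0 in_T[of 0] T(4) by force
  have last: "ts ! (L - 1) = 1"
    using less_iff[of "L - 1" k1] k1 in_T[of "L - 1"] T(4) by force
  define r where "r i = ts ! Suc i - ts ! i" for i
  have below: "sum r {i\<in>{..<L - 1}. ts ! i < ts ! j} = ts ! j" if j: "j < L" for j
  proof -
    have "{i\<in>{..<L - 1}. ts ! i < ts ! j} = {..<j}" using less_iff j by auto
    then show ?thesis by (simp add: r_def sum_lessThan_telescope first)
  qed
  show ?thesis
  proof (rule that[of "{..<L - 1}" r "\<lambda>i. ts ! i"])
    show "0 \<le> r i" if "i \<in> {..<L - 1}" for i
    proof -
      have "ts ! i < ts ! Suc i" using that by (subst less_iff) auto
      then show ?thesis by (simp add: r_def)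
    qed
    show "sum r {..<L - 1} = 1" using last by (simp add: r_def sum_lessThan_telescope first)
    show "sum r {i\<in>{..<L - 1}. ts ! i < z} = z" if "z \<in> T" for z
      using index[OF that] below by blast
  qed simp
qed

definition threshold_map :: "nat \<Rightarrow> (nat \<Rightarrow> real) \<Rightarrow> real \<Rightarrow> nat \<Rightarrow> nat" where
  "threshold_map m w c = (\<lambda>x\<in>{0..<m}. if c < w x then 0 else 1)"

lemma threshold_map_in_det_maps: "threshold_map m w c \<in> det_maps m 2"
  by (auto simp: threshold_map_def det_maps_def)

lemma det_entry_threshold_map:
  assumes "x < m"
  shows "det_entry (threshold_map m w c) x 0 = of_bool (c < w x)"
    "det_entry (threshold_map m w c) x 1 = 1 - of_bool (c < w x)"
  using assms by (simp_all add: threshold_map_def det_entry_def)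

lemma threshold_map_eq_const_map_iff:
  assumes x12: "x1 < m" "x2 < m" and extreme: "\<And>x. x < m \<Longrightarrow> w x1 \<le> w x \<and> w x \<le> w x2"
  shows "threshold_map m w c = const_map m 0 \<longleftrightarrow> c < w x1"
    "threshold_map m w c = const_map m 1 \<longleftrightarrow> \<not> c < w x2"
proof -
  have "threshold_map m w c = const_map m 0 \<longleftrightarrow> (\<forall>x<m. c < w x)"
    "threshold_map m w c = const_map m 1 \<longleftrightarrow> (\<forall>x<m. \<not> c < w x)"
    unfolding det_map_eq_const_map_iff[OF threshold_map_in_det_maps] by (auto simp: threshold_map_def)
  moreover have "(\<forall>x<m. c < w x) \<longleftrightarrow> c < w x1" using x12 extreme by (meson less_le_trans)
  moreover have "(\<forall>x<m. \<not> c < w x) \<longleftrightarrow> \<not> c < w x2" using x12 extreme by (meson less_le_trans)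
  ultimately show "threshold_map m w c = const_map m 0 \<longleftrightarrow> c < w x1"
    "threshold_map m w c = const_map m 1 \<longleftrightarrow> \<not> c < w x2"
    by simp_all
qed

lemma threshold_mixture_in_Lambda:
  assumes W: "is_channel {0..<m} {0..<2} W" and I: "finite I"
    and r: "\<And>i. i \<in> I \<Longrightarrow> 0 \<le> r i" "sum r I = 1"
    and below: "\<And>x. x < m \<Longrightarrow> sum r {i\<in>I. s i < W x 0} = W x 0"
  shows "(\<lambda>D. sum r {i\<in>I. threshold_map m (\<lambda>x. W x 0) (s i) = D}) \<in> Lambda m 2 W"
    (is "?lam \<in> _")
proof -
  let ?f = "\<lambda>i. threshold_map m (\<lambda>x. W x 0) (s i)"
  have f: "?f ` I \<subseteq> det_maps m 2" using threshold_map_in_det_maps by blast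
  have "W x y = (\<Sum>D\<in>det_maps m 2. ?lam D * det_entry D x y)" if x: "x < m" and y: "y < 2" for x y
  proof -
    have "(\<Sum>D\<in>det_maps m 2. ?lam D * det_entry D x y) = (\<Sum>i\<in>I. r i * det_entry (?f i) x y)"
      by (rule sum_pushforward[OF I finite_det_maps f])
    moreover have "(\<Sum>i\<in>I. r i * det_entry (?f i) x 0) = W x 0"
      using below[OF x] I unfolding det_entry_threshold_map(1)[OF x] by (simp add: Int_def)
    moreover have "(\<Sum>i\<in>I. r i * det_entry (?f i) x 1) = W x 1"
      using below[OF x] I r(2) binary_channel_row(1)[OF W] x
      unfolding det_entry_threshold_map(2)[OF x] by (simp add: Int_def right_diff_distrib sum_subtractf)
    ultimately show ?thesis using y by (auto simp: less_2_cases_iff)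
  qed
  then show ?thesis
    unfolding Lambda_def using prob_dist_pushforward[OF I finite_det_maps f r] by simp
qed

lemma Lambda_threshold_decomposition:
  assumes W: "is_channel {0..<m} {0..<2} W" and x12: "x1 < m" "x2 < m"
    and extreme: "\<And>x. x < m \<Longrightarrow> W x1 0 \<le> W x 0 \<and> W x 0 \<le> W x2 0"
  obtains lam where "lam \<in> Lambda m 2 W"
    "lam (const_map m 0) = W x1 0" "lam (const_map m 1) = 1 - W x2 0"
proof -
  define w where "w x = W x 0" for x
  obtain I :: "nat set" and r s where I: "finite I" and r: "\<And>i. i \<in> I \<Longrightarrow> 0 \<le> r i" "sum r I = 1"
    and below: "\<And>z. z \<in> insert 0 (insert 1 (w ` {0..<m})) \<Longrightarrow> sum r {i\<in>I. s i < z} = z"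
    by (rule finite_threshold_weights[of "insert 0 (insert 1 (w ` {0..<m}))"])
      (use binary_channel_row[OF W] in \<open>auto simp: w_def\<close>)
  have below_w: "sum r {i\<in>I. s i < w x} = w x" if "x < m" for x using below that by simp
  define lam where "lam D = sum r {i\<in>I. threshold_map m w (s i) = D}" for D
  have "lam \<in> Lambda m 2 W"
    unfolding lam_def w_def by (rule threshold_mixture_in_Lambda[OF W I r below_w[unfolded w_def]])
  moreover have "lam (const_map m 0) = W x1 0"
    using below_w[OF x12(1)] threshold_map_eq_const_map_iff(1)[of x1 m x2 w, OF x12]
    by (simp add: lam_def w_def extreme)
  moreover have "{i\<in>I. threshold_map m w (s i) = const_map m 1} = I - {i\<in>I. s i < w x2}"
    using threshold_map_eq_const_map_iff(2)[of x1 m x2 w, OF x12] by (auto simp: w_def extreme)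
  then have "lam (const_map m 1) = 1 - W x2 0"
    using below_w[OF x12(2)] r(2) I by (simp add: lam_def sum_diff w_def)
  ultimately show ?thesis using that by blast
qed

lemma extreme_inputs:
  fixes f :: "nat \<Rightarrow> real"
  assumes "m > 0"
  obtains x1 x2 where "x1 < m" "x2 < m" "\<And>x. x < m \<Longrightarrow> f x1 \<le> f x \<and> f x \<le> f x2"
proof -
  have S: "finite {..<m}" "{..<m} \<noteq> {}" using assms by auto
  obtain x1 where "is_arg_min f (\<lambda>x. x \<in> {..<m}) x1" using ex_is_arg_min_if_finite[OF S] by blast
  moreover obtain x2 where "is_arg_min (\<lambda>x. - f x) (\<lambda>x. x \<in> {..<m}) x2"
    using ex_is_arg_min_if_finite[OF S] by blast
  ultimately show ?thesis by (intro that[of x1 x2]) (auto simp: is_arg_min_linorder)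
qed

lemma Lambda_binary_nonempty:
  assumes "is_channel {0..<m} {0..<2} W" "m > 0"
  shows "Lambda m 2 W \<noteq> {}"
proof -
  obtain x1 x2 where x12: "x1 < m" "x2 < m"
    and extreme: "\<And>x. x < m \<Longrightarrow> W x1 0 \<le> W x 0 \<and> W x 0 \<le> W x2 0"
    using extreme_inputs[where f = "\<lambda>x. W x 0", OF assms(2)] by blast
  obtain lam where "lam \<in> Lambda m 2 W"
    using Lambda_threshold_decomposition[OF assms(1) x12 extreme] .
  then show ?thesis by blast
qed

section \<open>The extreme values of \<open>C\<^sub>1\<^sub>0\<close>\<close>

lemma lower_C10_binary:
  assumes W: "is_channel {0..<m} {0..<2} W" and m: "m > 0"
  shows "lower_C10 m 2 W = capacity {0..<m} {0..<2} W"
proof -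
  obtain x1 x2 where x12: "x1 < m" "x2 < m"
    and extreme: "\<And>x. x < m \<Longrightarrow> W x1 0 \<le> W x 0 \<and> W x 0 \<le> W x2 0"
    using extreme_inputs[where f = "\<lambda>x. W x 0", OF m] by blast
  have cap: "capacity {0..<m} {0..<2} W = bin_cap (W x1 0) (W x2 0)"
    using x12 extreme by (intro capacity_binary[OF _ W]) auto
  obtain lam0 where lam0: "lam0 \<in> Lambda m 2 W"
    "lam0 (const_map m 0) = W x1 0" "lam0 (const_map m 1) = 1 - W x2 0"
    using Lambda_threshold_decomposition[OF W x12 extreme] by blast
  have "C10 m 2 lam0 = bin_cap (W x1 0) (W x2 0)"
    using C10_binary[OF m Lambda_prob_dist[OF lam0(1)]] lam0 by simp
  then have attained: "bin_cap (W x1 0) (W x2 0) \<in> C10 m 2 ` Lambda m 2 W"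
    using lam0(1) by (metis image_eqI)
  have "bin_cap (W x1 0) (W x2 0) \<le> C10 m 2 lam" if lam: "lam \<in> Lambda m 2 W" for lam
  proof -
    note pd = Lambda_prob_dist[OF lam]
    have "lam (const_map m 0) \<le> W x1 0" "lam (const_map m 1) \<le> W x2 1"
      using Lambda_const_map_weight_le[OF lam] x12 by auto
    moreover have "0 \<le> lam (const_map m 0)" "0 \<le> lam (const_map m 1)"
      using const_map_weight_nonneg[OF pd] by auto
    ultimately show ?thesis
      unfolding C10_binary[OF m pd] using extreme x12 binary_channel_row[OF W]
      by (intro bin_cap_mono) auto
  qed
  then show ?thesis unfolding lower_C10_def cap using attained by (intro cInf_eq_minimum) auto
qed

definition const_mass :: "nat \<Rightarrow> ((nat \<Rightarrow> nat) \<Rightarrow> real) \<Rightarrow> real" where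
  "const_mass m lam = lam (const_map m 0) + lam (const_map m 1)"

lemma lower_P1_binary:
  assumes "m > 0"
  shows "lower_P1 m 2 W = Inf (const_mass m ` Lambda m 2 W)"
proof -
  have "{D \<in> det_maps m 2. det_rank m 2 D = 1} = {const_map m 0, const_map m 1}"
    using det_rank_eq_1_iff[OF assms] const_map_in_det_maps[of _ 2 m]
    by (auto simp: less_2_cases_iff)
  then show ?thesis
    using const_map_eq_iff[OF assms, of 0 1] by (simp add: lower_P1_def const_mass_def)
qed

lemma const_mass_bounds:
  assumes "prob_dist (det_maps m 2) lam" "m > 0"
  shows "0 \<le> const_mass m lam" "const_mass m lam \<le> 1"
  using const_map_weight_nonneg[OF assms(1), of 0] const_map_weight_nonneg[OF assms(1), of 1]
    const_map_weights_le[OF assms, of 0 1]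
  by (simp_all add: const_mass_def)

lemma Inf_const_mass_bounds:
  assumes "m > 0" "Lambda m 2 W \<noteq> {}"
  shows "0 \<le> Inf (const_mass m ` Lambda m 2 W)" "Inf (const_mass m ` Lambda m 2 W) \<le> 1"
proof -
  note mass = const_mass_bounds[OF Lambda_prob_dist assms(1)]
  show "0 \<le> Inf (const_mass m ` Lambda m 2 W)" using assms mass by (intro cInf_greatest) auto
  obtain lam where lam: "lam \<in> Lambda m 2 W" using assms by blast
  have "Inf (const_mass m ` Lambda m 2 W) \<le> const_mass m lam"
    using lam mass by (intro cInf_lower bdd_belowI[of _ 0]) auto
  then show "Inf (const_mass m ` Lambda m 2 W) \<le> 1" using mass[OF lam] by simp
qed

lemma C10_le_bin_cap_const_mass:
  assumes m: "m > 0" and lam: "prob_dist (det_maps m 2) lam"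
  shows "C10 m 2 lam \<le> bin_cap (const_mass m lam) 1"
  unfolding C10_binary[OF m lam] const_mass_def
  using const_map_weight_nonneg[OF lam] const_map_weights_le[OF lam m, of 0 1]
  by (intro bin_cap_le_bin_cap_sum) auto

lemma C10_eq_bin_cap_const_mass:
  assumes m: "m > 0" and lam: "prob_dist (det_maps m 2) lam"
    and "lam (const_map m 0) = 0 \<or> lam (const_map m 1) = 0"
  shows "C10 m 2 lam = bin_cap (const_mass m lam) 1"
  using assms(3) bin_cap_one_minus[where a = "lam (const_map m 1)" and b = 1]
  by (auto simp: C10_binary[OF m lam] const_mass_def)

lemma Lambda_exchange:
  assumes lam: "lam \<in> Lambda m n W"
    and maps: "D1 \<in> det_maps m n" "D2 \<in> det_maps m n" "E1 \<in> det_maps m n" "E2 \<in> det_maps m n"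
    and distinct: "distinct [D1, D2, E1, E2]"
    and entries: "\<And>x y. x < m \<Longrightarrow> y < n
      \<Longrightarrow> det_entry D1 x y + det_entry D2 x y = det_entry E1 x y + det_entry E2 x y"
    and e: "0 \<le> e" "e \<le> lam E1" "e \<le> lam E2"
  shows "(\<lambda>D. lam D + e * (of_bool (D = D1) + of_bool (D = D2) - of_bool (D = E1) - of_bool (D = E2)))
    \<in> Lambda m n W"
    (is "?lam' \<in> _")
proof -
  have shift: "(\<Sum>D\<in>det_maps m n. ?lam' D * g D)
      = (\<Sum>D\<in>det_maps m n. lam D * g D) + e * (g D1 + g D2 - g E1 - g E2)" for g
  proof -
    have "(\<Sum>D\<in>det_maps m n. ?lam' D * g D) = (\<Sum>D\<in>det_maps m n. lam D * g D)
        + e * ((\<Sum>D\<in>det_maps m n. of_bool (D = D1) * g D) + (\<Sum>D\<in>det_maps m n. of_bool (D = D2) * g D)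
          - (\<Sum>D\<in>det_maps m n. of_bool (D = E1) * g D) - (\<Sum>D\<in>det_maps m n. of_bool (D = E2) * g D))"
      by (simp add: algebra_simps sum.distrib sum_subtractf sum_distrib_left)
    then show ?thesis using maps finite_det_maps by simp
  qed
  have pd: "prob_dist (det_maps m n) lam" and marg: "\<And>x y. x < m \<Longrightarrow> y < n
      \<Longrightarrow> W x y = (\<Sum>D\<in>det_maps m n. lam D * det_entry D x y)"
    using lam by (auto simp: Lambda_def)
  have "0 \<le> ?lam' D" if "D \<in> det_maps m n" for D
  proof -
    have "0 \<le> lam D" using pd that by (simp add: prob_dist_def)
    have neq: "E1 \<noteq> D1" "E1 \<noteq> D2" "E1 \<noteq> E2" "E2 \<noteq> D1" "E2 \<noteq> D2" using distinct by auto
    consider "D = E1" | "D = E2" | "D \<noteq> E1" "D \<noteq> E2" by blast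
    then show ?thesis
    proof cases
      case 3
      then show ?thesis using \<open>0 \<le> lam D\<close> e(1) by (simp add: of_bool_def)
    qed (use e neq in simp_all)
  qed
  moreover have "sum ?lam' (det_maps m n) = 1" using shift[of "\<lambda>_. 1"] pd by (simp add: prob_dist_def)
  moreover have "W x y = (\<Sum>D\<in>det_maps m n. ?lam' D * det_entry D x y)"
    if "x \<in> {0..<m}" "y \<in> {0..<n}" for x y
    using shift[of "\<lambda>D. det_entry D x y"] marg entries that by simp
  ultimately show ?thesis unfolding Lambda_def prob_dist_def by blast
qed

text \<open>For \<open>m \<ge> 2\<close> the two maps that separate input \<open>0\<close> from the others carry together the
  same row distributions as the two constant maps, so mass can be moved from the constants to
  them until one of the constants has weight zero.\<close>

lemma Lambda_reduce_const_mass: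
  assumes m: "m \<ge> 2" and lam: "lam \<in> Lambda m 2 W"
  obtains lam' where "lam' \<in> Lambda m 2 W"
    "lam' (const_map m 0) = 0 \<or> lam' (const_map m 1) = 0" "const_mass m lam' \<le> const_mass m lam"
proof -
  define D1 where "D1 = (\<lambda>x\<in>{0..<m}. if x = 0 then 0 else (1::nat))"
  define D2 where "D2 = (\<lambda>x\<in>{0..<m}. if x = 0 then 1 else (0::nat))"
  let ?c0 = "const_map m 0" and ?c1 = "const_map m 1"
  have "distinct (map (\<lambda>f. (f 0, f 1)) [D1, D2, ?c0, ?c1])"
    using m by (simp add: D1_def D2_def const_map_def)
  then have distinct: "distinct [D1, D2, ?c0, ?c1]" by (simp only: distinct_map)
  have maps: "D1 \<in> det_maps m 2" "D2 \<in> det_maps m 2" "?c0 \<in> det_maps m 2" "?c1 \<in> det_maps m 2"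
    by (auto simp: det_maps_def D1_def D2_def const_map_def)
  have entries: "det_entry D1 x y + det_entry D2 x y = det_entry ?c0 x y + det_entry ?c1 x y"
    if "x < m" "y < 2" for x y
    using that by (auto simp: det_entry_def D1_def D2_def const_map_def less_2_cases_iff)
  define e where "e = min (lam ?c0) (lam ?c1)"
  have "0 \<le> lam ?c0" "0 \<le> lam ?c1"
    using const_map_weight_nonneg[OF Lambda_prob_dist[OF lam]] by auto
  then have e: "0 \<le> e" "e \<le> lam ?c0" "e \<le> lam ?c1" by (auto simp: e_def)
  define lam' where "lam' D = lam D + e * (of_bool (D = D1) + of_bool (D = D2)
    - of_bool (D = ?c0) - of_bool (D = ?c1))" for D
  have "lam' \<in> Lambda m 2 W"
    unfolding lam'_def using maps distinct entries e by (rule Lambda_exchange[OF lam])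
  moreover have "lam' ?c0 = lam ?c0 - e" "lam' ?c1 = lam ?c1 - e"
    using distinct by (auto simp: lam'_def)
  ultimately show ?thesis using e by (intro that[of lam']) (auto simp: e_def const_mass_def)
qed

text \<open>Instead of showing that the infimum \<open>P\<close> is attained, the lower bound approximates it,
  using that \<open>p \<mapsto> bin_cap p 1\<close> is lower semicontinuous.\<close>

lemma upper_C10_binary:
  assumes m: "m \<ge> 2" and ne: "Lambda m 2 W \<noteq> {}"
  shows "upper_C10 m 2 W = bin_cap (Inf (const_mass m ` Lambda m 2 W)) 1"
proof -
  let ?L = "Lambda m 2 W"
  define P where "P = Inf (const_mass m ` ?L)"
  have m0: "m > 0" using m by simp
  note mass = const_mass_bounds[OF Lambda_prob_dist m0]
  have P: "0 \<le> P" "P \<le> 1" unfolding P_def using Inf_const_mass_bounds[OF m0 ne] by auto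
  have P_le: "P \<le> const_mass m lam" if "lam \<in> ?L" for lam
    unfolding P_def using that mass by (intro cInf_lower bdd_belowI[of _ 0]) auto
  have upper: "C10 m 2 lam \<le> bin_cap P 1" if lam: "lam \<in> ?L" for lam
  proof -
    have "C10 m 2 lam \<le> bin_cap (const_mass m lam) 1"
      by (rule C10_le_bin_cap_const_mass[OF m0 Lambda_prob_dist[OF lam]])
    also have "\<dots> \<le> bin_cap P 1" using P P_le[OF lam] mass[OF lam] by (intro bin_cap_mono) auto
    finally show ?thesis .
  qed
  have "bin_cap P 1 \<le> Sup (C10 m 2 ` ?L)"
  proof (rule bin_cap_le_if_approx[OF P])
    fix d :: real assume "d > 0"
    then obtain lam where lam: "lam \<in> ?L" "const_mass m lam < P + d"
      using cInf_lessD[of "const_mass m ` ?L" "P + d"] ne unfolding P_def by auto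
    then obtain lam' where lam': "lam' \<in> ?L"
      "lam' (const_map m 0) = 0 \<or> lam' (const_map m 1) = 0" "const_mass m lam' \<le> const_mass m lam"
      using Lambda_reduce_const_mass[OF m] by blast
    have "bin_cap (const_mass m lam') 1 = C10 m 2 lam'"
      using C10_eq_bin_cap_const_mass[OF m0 Lambda_prob_dist[OF lam'(1)] lam'(2)] by simp
    also have "\<dots> \<le> Sup (C10 m 2 ` ?L)" using lam'(1) upper by (intro cSup_upper bdd_aboveI) auto
    finally show "\<exists>p\<in>{0..1}. dist p P < d \<and> bin_cap p 1 \<le> Sup (C10 m 2 ` ?L)"
      using lam lam' P_le[OF lam'(1)] mass[OF lam'(1)]
      by (intro bexI[of _ "const_mass m lam'"]) (auto simp: dist_real_def)
  qed
  moreover have "Sup (C10 m 2 ` ?L) \<le> bin_cap P 1" using ne upper by (intro cSup_least) auto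
  ultimately show ?thesis unfolding upper_C10_def P_def by simp
qed

lemma capacity_Z_chan:
  assumes "0 \<le> p" "p \<le> 1"
  shows "capacity {0..<2} {0..<2} (Z_chan p) = bin_cap p 1"
proof -
  have "Z_chan p = bin_chan 1 p" by (intro ext) (simp add: Z_chan_def bin_chan_def)
  then show ?thesis using capacity_bin_chan[of 1 p] assms by simp
qed

theorem theorem3:
  fixes m :: nat and W :: "nat \<Rightarrow> nat \<Rightarrow> real"
  assumes "m \<ge> 2"
    and "is_channel {0..<m} {0..<2} W"
  shows "lower_C10 m 2 W = capacity {0..<m} {0..<2} W
       \<and> upper_C10 m 2 W = capacity {0..<2} {0..<2} (Z_chan (lower_P1 m 2 W))"
proof -
  have m: "m > 0" using assms(1) by simp
  have ne: "Lambda m 2 W \<noteq> {}" by (rule Lambda_binary_nonempty[OF assms(2) m])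
  show ?thesis
    using lower_C10_binary[OF assms(2) m] upper_C10_binary[OF assms(1) ne]
      lower_P1_binary[OF m] capacity_Z_chan[OF Inf_const_mass_bounds[OF m ne]]
    by simp
qed

end
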